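(* Let $k\ge6$ be an integer and $\alpha>\beta>0$. Then $$ (N'_{-1},N'_1)\subset(N_{-1},N_1)\subset(\delta_{-1},\delta_1). $$
   Context: Put $r=2k+\alpha+\beta+1$, $q=(\alpha-\beta)/r$, $s=(\alpha+\beta)/r$, and let $\omega,\tau,\tau'\in(0,\pi/2)$ be given by $\sin\omega=q$, $\sin\tau=s$, $\sin\tau'=\frac{\alpha+\beta+1}{2k+\alpha+\beta+1}$. For $j=\pm1$ let $\delta_j=j\cos(\tau+j\omega)$, $$N'_j=j\left(\cos(\tau'+j\omega)-\frac{3}{10}\left(\frac{\sin^4(\tau'+j\omega)}{2\cos\tau'\cos\omega}\right)^{1/3}r^{-2/3}\right),$$ $$N_j=j\left(\cos(\tau+j\omega)-\frac{5}{17}\left(\frac{\sin^4(\tau+j\omega)}{2\cos\tau\cos\omega}\right)^{1/3}r^{-2/3}\right).$$ *)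

theory Defs
  imports Complex_Main
begin

definition rr :: "nat \<Rightarrow> real \<Rightarrow> real \<Rightarrow> real" where
  "rr k \<alpha> \<beta> = 2 * real k + \<alpha> + \<beta> + 1"

definition omg :: "nat \<Rightarrow> real \<Rightarrow> real \<Rightarrow> real" where
  "omg k \<alpha> \<beta> = arcsin ((\<alpha> - \<beta>) / rr k \<alpha> \<beta>)"

definition tau :: "nat \<Rightarrow> real \<Rightarrow> real \<Rightarrow> real" where
  "tau k \<alpha> \<beta> = arcsin ((\<alpha> + \<beta>) / rr k \<alpha> \<beta>)"

definition tau' :: "nat \<Rightarrow> real \<Rightarrow> real \<Rightarrow> real" where
  "tau' k \<alpha> \<beta> = arcsin ((\<alpha> + \<beta> + 1) / (2 * real k + \<alpha> + \<beta> + 1))"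

definition delta :: "int \<Rightarrow> nat \<Rightarrow> real \<Rightarrow> real \<Rightarrow> real" where
  "delta j k \<alpha> \<beta> = of_int j * cos (tau k \<alpha> \<beta> + of_int j * omg k \<alpha> \<beta>)"

definition N' :: "int \<Rightarrow> nat \<Rightarrow> real \<Rightarrow> real \<Rightarrow> real" where
  "N' j k \<alpha> \<beta> = of_int j *
     (cos (tau' k \<alpha> \<beta> + of_int j * omg k \<alpha> \<beta>)
      - 3/10 * root 3 (sin (tau' k \<alpha> \<beta> + of_int j * omg k \<alpha> \<beta>) ^ 4
                       / (2 * cos (tau' k \<alpha> \<beta>) * cos (omg k \<alpha> \<beta>)))
            * rr k \<alpha> \<beta> powr (-2/3))"

definition N :: "int \<Rightarrow> nat \<Rightarrow> real \<Rightarrow> real \<Rightarrow> real" where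
  "N j k \<alpha> \<beta> = of_int j *
     (cos (tau k \<alpha> \<beta> + of_int j * omg k \<alpha> \<beta>)
      - 5/17 * root 3 (sin (tau k \<alpha> \<beta> + of_int j * omg k \<alpha> \<beta>) ^ 4
                       / (2 * cos (tau k \<alpha> \<beta>) * cos (omg k \<alpha> \<beta>)))
            * rr k \<alpha> \<beta> powr (-2/3))"

end

theory Submission
  imports Defs
begin

text \<open>
  The outer inclusion holds because the cube-root corrections in \<open>N\<^sub>j\<close> are nonnegative.
  For the inner one, \<open>\<tau> < \<tau>'\<close> gives \<open>cos (\<tau>' + j\<omega>) \<le> cos (\<tau> + j\<omega>)\<close>, so it suffices that
  the correction with constant \<open>3/10\<close> at \<open>\<tau>'\<close> dominates the one with \<open>5/17\<close> at \<open>\<tau>\<close>, i.e.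
  after cubing and clearing denominators
  \<open>(5/17)\<^sup>3 cos \<tau>' sin\<^sup>4 (\<tau> + j\<omega>) \<le> (3/10)\<^sup>3 cos \<tau> sin\<^sup>4 (\<tau>' + j\<omega>)\<close>.
  For \<open>j = -1\<close> this is monotonicity of sine and cosine on \<open>[0, \<pi>/2]\<close>. For \<open>j = 1\<close> the
  angle \<open>\<tau>' + \<omega>\<close> may pass \<open>\<pi>/2\<close>; instead one combines
  \<open>(cos \<tau> + cos \<tau>') sin (\<tau> + \<omega>) \<le> 2 cos \<tau> sin (\<tau>' + \<omega>)\<close>, the tangent-line bound
  \<open>16 a\<^sup>3 (2b - a) \<le> (a + b)\<^sup>4\<close>, and \<open>cos \<tau>' \<ge> (24/25) cos \<tau>\<close>, which is where \<open>k \<ge> 6\<close> enters.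
\<close>

definition edge_bound :: "real \<Rightarrow> real \<Rightarrow> real \<Rightarrow> real \<Rightarrow> real" where
  "edge_bound c \<rho> \<tau> \<omega> = cos (\<tau> + \<omega>) - c * root 3 (sin (\<tau> + \<omega>) ^ 4 / (2 * cos \<tau> * cos \<omega>)) * \<rho>"

lemma mult_root_mono:
  fixes a b x y :: real
  assumes "0 < n" "0 \<le> a" "0 \<le> b" "a ^ n * x \<le> b ^ n * y"
  shows "a * root n x \<le> b * root n y"
proof -
  have "a * root n x = root n (a ^ n * x)"
    using assms by (simp add: real_root_mult real_root_power_cancel)
  also have "\<dots> \<le> root n (b ^ n * y)"
    using assms by simp
  also have "\<dots> = b * root n y"
    using assms by (simp add: real_root_mult real_root_power_cancel)
  finally show ?thesis .
qed

lemma power4_add_ge_tangent: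
  fixes a b :: "'a :: linordered_idom"
  shows "16 * a ^ 3 * (2 * b - a) \<le> (a + b) ^ 4"
proof -
  have "(a + b) ^ 4 - 16 * a ^ 3 * (2 * b - a) = (b - a) ^ 2 * ((b + 3 * a) ^ 2 + 8 * a ^ 2)"
    by algebra
  also have "\<dots> \<ge> 0"
    by simp
  finally show ?thesis
    by simp
qed

lemma edge_bound_le_cos:
  assumes "0 \<le> c" "0 \<le> \<rho>" "0 \<le> cos \<tau>" "0 \<le> cos \<omega>"
  shows "edge_bound c \<rho> \<tau> \<omega> \<le> cos (\<tau> + \<omega>)"
  using assms by (simp add: edge_bound_def real_root_ge_zero)

lemma edge_bound_mono:
  assumes "0 \<le> a" "0 \<le> b" and \<rho>: "0 \<le> \<rho>"
    and "0 < cos \<tau>" "0 < cos \<tau>'" "0 < cos \<omega>"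
    and cos_le: "cos (\<tau>' + \<omega>) \<le> cos (\<tau> + \<omega>)"
    and "a ^ 3 * cos \<tau>' * sin (\<tau> + \<omega>) ^ 4 \<le> b ^ 3 * cos \<tau> * sin (\<tau>' + \<omega>) ^ 4"
  shows "edge_bound b \<rho> \<tau>' \<omega> \<le> edge_bound a \<rho> \<tau> \<omega>"
proof -
  let ?d = "2 * cos \<tau> * cos \<tau>' * cos \<omega>"
  have "a ^ 3 * (sin (\<tau> + \<omega>) ^ 4 / (2 * cos \<tau> * cos \<omega>))
      = a ^ 3 * cos \<tau>' * sin (\<tau> + \<omega>) ^ 4 / ?d"
    using assms by (simp add: field_simps)
  also have "\<dots> \<le> b ^ 3 * cos \<tau> * sin (\<tau>' + \<omega>) ^ 4 / ?d"
    using assms by (intro divide_right_mono) auto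
  also have "\<dots> = b ^ 3 * (sin (\<tau>' + \<omega>) ^ 4 / (2 * cos \<tau>' * cos \<omega>))"
    using assms by (simp add: field_simps)
  finally have "a * root 3 (sin (\<tau> + \<omega>) ^ 4 / (2 * cos \<tau> * cos \<omega>))
      \<le> b * root 3 (sin (\<tau>' + \<omega>) ^ 4 / (2 * cos \<tau>' * cos \<omega>))"
    using assms by (intro mult_root_mono) auto
  then have "a * root 3 (sin (\<tau> + \<omega>) ^ 4 / (2 * cos \<tau> * cos \<omega>)) * \<rho>
      \<le> b * root 3 (sin (\<tau>' + \<omega>) ^ 4 / (2 * cos \<tau>' * cos \<omega>)) * \<rho>"
    using \<rho> by (rule mult_right_mono)
  then show ?thesis
    using cos_le unfolding edge_bound_def by linarith
qed

lemma sin_add_lower_bound: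
  fixes \<omega> \<tau> \<tau>' :: real
  assumes "0 \<le> \<omega>" "\<omega> \<le> \<tau>" "\<tau> \<le> \<tau>'" "\<tau>' \<le> pi/2"
  shows "(cos \<tau> + cos \<tau>') * sin (\<tau> + \<omega>) \<le> 2 * cos \<tau> * sin (\<tau>' + \<omega>)"
proof -
  have sin_le: "sin \<tau> \<le> sin \<tau>'"
    using assms by (intro sin_monotone_2pi_le) auto
  have cos_le: "cos \<tau>' \<le> cos \<tau>"
    using assms by (intro cos_monotone_0_pi_le) auto
  have "0 \<le> cos \<omega>" "0 \<le> cos \<tau>"
    using assms by (auto intro!: cos_ge_zero)
  have "0 \<le> sin (\<tau> - \<omega>)"
    using assms by (intro sin_ge_zero) auto
  then have gap: "2 * cos \<tau> * sin \<omega> \<le> sin (\<tau> + \<omega>)"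
    by (simp add: sin_add sin_diff)
  have "sin \<tau> * cos \<omega> \<le> sin \<tau>' * cos \<omega>"
    using sin_le \<open>0 \<le> cos \<omega>\<close> by (rule mult_right_mono)
  then have shift: "sin (\<tau> + \<omega>) - (cos \<tau> - cos \<tau>') * sin \<omega> \<le> sin (\<tau>' + \<omega>)"
    by (simp add: sin_add algebra_simps)
  have "(cos \<tau> + cos \<tau>') * sin (\<tau> + \<omega>)
      = 2 * cos \<tau> * sin (\<tau> + \<omega>) - (cos \<tau> - cos \<tau>') * sin (\<tau> + \<omega>)"
    by (simp add: algebra_simps)
  also have "\<dots> \<le> 2 * cos \<tau> * sin (\<tau> + \<omega>) - (cos \<tau> - cos \<tau>') * (2 * cos \<tau> * sin \<omega>)"
    using gap cos_le by (simp add: mult_left_mono)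
  also have "\<dots> = 2 * cos \<tau> * (sin (\<tau> + \<omega>) - (cos \<tau> - cos \<tau>') * sin \<omega>)"
    by (simp add: algebra_simps)
  also have "\<dots> \<le> 2 * cos \<tau> * sin (\<tau>' + \<omega>)"
    using shift \<open>0 \<le> cos \<tau>\<close> by (simp add: mult_left_mono)
  finally show ?thesis .
qed

lemma sin_add_pow4_cross_mono:
  fixes \<omega> \<tau> \<tau>' :: real
  assumes "0 \<le> \<omega>" "\<omega> \<le> \<tau>" "\<tau> \<le> \<tau>'" "\<tau>' < pi/2"
    and cos_sq: "12 * cos \<tau> ^ 2 \<le> 13 * cos \<tau>' ^ 2"
  shows "(5/17) ^ 3 * cos \<tau>' * sin (\<tau> + \<omega>) ^ 4 \<le> (3/10) ^ 3 * cos \<tau> * sin (\<tau>' + \<omega>) ^ 4"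
proof -
  define c c' P P' where "c = cos \<tau>" "c' = cos \<tau>'" "P = sin (\<tau> + \<omega>)" "P' = sin (\<tau>' + \<omega>)"
  have "0 < c" "0 < c'"
    unfolding c_c'_P_P'_def using assms by (auto intro!: cos_gt_zero_pi)
  have "0 \<le> P"
    unfolding c_c'_P_P'_def using assms by (intro sin_ge_zero) auto
  have "(P * (c + c')) ^ 4 \<le> (2 * c * P') ^ 4"
    using sin_add_lower_bound[of \<omega> \<tau> \<tau>'] assms \<open>0 < c\<close> \<open>0 < c'\<close> \<open>0 \<le> P\<close>
    unfolding c_c'_P_P'_def by (intro power_mono) (auto simp: mult.commute)
  then have "(c + c') ^ 4 * P ^ 4 \<le> 16 * c ^ 3 * (c * P' ^ 4)"
    by (simp add: power_mult_distrib power4_eq_xxxx power3_eq_cube mult_ac)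
  moreover have "16 * c ^ 3 * (2 * c' - c) * P ^ 4 \<le> (c + c') ^ 4 * P ^ 4"
    by (intro mult_right_mono power4_add_ge_tangent) simp
  ultimately have "16 * c ^ 3 * ((2 * c' - c) * P ^ 4) \<le> 16 * c ^ 3 * (c * P' ^ 4)"
    by (simp add: mult.assoc)
  then have tangent: "(2 * c' - c) * P ^ 4 \<le> c * P' ^ 4"
    using \<open>0 < c\<close> by simp
  have "12 * c ^ 2 \<le> 13 * c' ^ 2"
    using cos_sq by (simp add: c_c'_P_P'_def)
  have "(24/25 * c) ^ 2 = 576/625 * c ^ 2"
    by (simp add: power2_eq_square)
  also have "\<dots> \<le> c' ^ 2"
    using \<open>12 * c ^ 2 \<le> 13 * c' ^ 2\<close> zero_le_power2[of c] by linarith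
  finally have "24/25 * c \<le> c'"
    by (rule power2_le_imp_le) (use \<open>0 < c'\<close> in simp)
  then have "(5/17) ^ 3 * c' \<le> (3/10) ^ 3 * (2 * c' - c)"
    using \<open>0 < c'\<close> by (simp add: power3_eq_cube)
  then have "(5/17) ^ 3 * c' * P ^ 4 \<le> (3/10) ^ 3 * (2 * c' - c) * P ^ 4"
    by (rule mult_right_mono) simp
  also have "\<dots> = (3/10) ^ 3 * ((2 * c' - c) * P ^ 4)"
    by (simp only: mult.assoc)
  also have "\<dots> \<le> (3/10) ^ 3 * (c * P' ^ 4)"
    using tangent by simp
  finally show ?thesis
    unfolding c_c'_P_P'_def by (simp add: mult.assoc)
qed

lemma sin_diff_pow4_cross_mono:
  fixes \<omega> \<tau> \<tau>' :: real
  assumes "0 \<le> \<omega>" "\<omega> \<le> \<tau>" "\<tau> \<le> \<tau>'" "\<tau>' \<le> pi/2"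
  shows "(5/17) ^ 3 * cos \<tau>' * sin (\<tau> - \<omega>) ^ 4 \<le> (3/10) ^ 3 * cos \<tau> * sin (\<tau>' - \<omega>) ^ 4"
proof -
  have "0 \<le> cos \<tau>'" "cos \<tau>' \<le> cos \<tau>"
    using assms by (auto intro!: cos_ge_zero cos_monotone_0_pi_le)
  then have "(5/17) ^ 3 * cos \<tau>' \<le> (3/10) ^ 3 * cos \<tau>"
    by (simp add: power3_eq_cube)
  moreover have "0 \<le> sin (\<tau> - \<omega>)" "sin (\<tau> - \<omega>) \<le> sin (\<tau>' - \<omega>)"
    using assms by (auto intro!: sin_ge_zero sin_monotone_2pi_le)
  then have "sin (\<tau> - \<omega>) ^ 4 \<le> sin (\<tau>' - \<omega>) ^ 4"
    by (rule power_mono[rotated])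
  ultimately show ?thesis
    using \<open>0 \<le> cos \<tau>'\<close> \<open>cos \<tau>' \<le> cos \<tau>\<close> by (intro mult_mono) simp_all
qed

lemma arcsin_parameters_ordered:
  assumes "0 < k" "\<beta> < \<alpha>" "0 < \<beta>"
  shows "0 < omg k \<alpha> \<beta>" "omg k \<alpha> \<beta> < tau k \<alpha> \<beta>"
    "tau k \<alpha> \<beta> < tau' k \<alpha> \<beta>" "tau' k \<alpha> \<beta> < pi/2"
proof -
  define r where "r = rr k \<alpha> \<beta>"
  have r: "r = 2 * real k + \<alpha> + \<beta> + 1" "0 < r"
    using assms by (auto simp: r_def rr_def)
  have "0 < (\<alpha> - \<beta>) / r" "(\<alpha> - \<beta>) / r < (\<alpha> + \<beta>) / r"
    "(\<alpha> + \<beta>) / r < (\<alpha> + \<beta> + 1) / r" "(\<alpha> + \<beta> + 1) / r < 1"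
    using assms r by (auto simp: divide_strict_right_mono)
  then show "0 < omg k \<alpha> \<beta>" "omg k \<alpha> \<beta> < tau k \<alpha> \<beta>"
    "tau k \<alpha> \<beta> < tau' k \<alpha> \<beta>" "tau' k \<alpha> \<beta> < pi/2"
    unfolding omg_def tau_def tau'_def r_def[symmetric] r(1)[symmetric]
    using arcsin_less_arcsin[of 0 "(\<alpha> - \<beta>) / r"] arcsin_lt_bounded[of "(\<alpha> + \<beta> + 1) / r"]
    by (auto intro!: arcsin_less_arcsin)
qed

lemma cos_tau_sq_le:
  assumes "6 \<le> k" "0 \<le> \<alpha> + \<beta>"
  shows "12 * cos (tau k \<alpha> \<beta>) ^ 2 \<le> 13 * cos (tau' k \<alpha> \<beta>) ^ 2"
proof -
  define r s s' where "r = rr k \<alpha> \<beta>" "s = (\<alpha> + \<beta>) / r" "s' = (\<alpha> + \<beta> + 1) / r"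
  have r: "r = 2 * real k + \<alpha> + \<beta> + 1" "0 < r"
    using assms by (auto simp: r_s_s'_def rr_def)
  have "1 - s = (2 * real k + 1) / r" "1 - s' = 2 * real k / r"
    using r by (auto simp: r_s_s'_def field_simps)
  then have factor: "12 * (1 - s) \<le> 13 * (1 - s')" "0 \<le> 1 - s'"
    using assms r by (auto simp: divide_right_mono)
  have "0 \<le> s" "s \<le> s'" "s' \<le> 1"
    using assms r by (auto simp: r_s_s'_def divide_right_mono)
  then have "12 * (1 - s) * (1 + s) \<le> 13 * (1 - s') * (1 + s')"
    using factor by (intro mult_mono[OF factor(1)]) auto
  moreover have "sin (tau k \<alpha> \<beta>) = s" "sin (tau' k \<alpha> \<beta>) = s'"
    using \<open>0 \<le> s\<close> \<open>s \<le> s'\<close> \<open>s' \<le> 1\<close>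
    by (auto simp: tau_def tau'_def r_s_s'_def r(1)[symmetric])
  ultimately show ?thesis
    unfolding cos_squared_eq by (simp add: power2_eq_square algebra_simps)
qed

lemma N_eq_edge_bound:
  "N 1 k \<alpha> \<beta> = edge_bound (5/17) (rr k \<alpha> \<beta> powr (-2/3)) (tau k \<alpha> \<beta>) (omg k \<alpha> \<beta>)"
  "N (-1) k \<alpha> \<beta> = - edge_bound (5/17) (rr k \<alpha> \<beta> powr (-2/3)) (tau k \<alpha> \<beta>) (- omg k \<alpha> \<beta>)"
  by (simp_all add: N_def edge_bound_def)

lemma N'_eq_edge_bound:
  "N' 1 k \<alpha> \<beta> = edge_bound (3/10) (rr k \<alpha> \<beta> powr (-2/3)) (tau' k \<alpha> \<beta>) (omg k \<alpha> \<beta>)"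
  "N' (-1) k \<alpha> \<beta> = - edge_bound (3/10) (rr k \<alpha> \<beta> powr (-2/3)) (tau' k \<alpha> \<beta>) (- omg k \<alpha> \<beta>)"
  by (simp_all add: N'_def edge_bound_def)

lemma delta_eq_cos:
  "delta 1 k \<alpha> \<beta> = cos (tau k \<alpha> \<beta> + omg k \<alpha> \<beta>)"
  "delta (-1) k \<alpha> \<beta> = - cos (tau k \<alpha> \<beta> - omg k \<alpha> \<beta>)"
  by (simp_all add: delta_def)

theorem lemma10:
  fixes k :: nat and \<alpha> \<beta> :: real
  assumes "k \<ge> 6" and "\<alpha> > \<beta>" and "\<beta> > 0"
  shows "{N' (-1) k \<alpha> \<beta> <..< N' 1 k \<alpha> \<beta>} \<subseteq> {N (-1) k \<alpha> \<beta> <..< N 1 k \<alpha> \<beta>}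
       \<and> {N (-1) k \<alpha> \<beta> <..< N 1 k \<alpha> \<beta>} \<subseteq> {delta (-1) k \<alpha> \<beta> <..< delta 1 k \<alpha> \<beta>}"
proof -
  let ?\<rho> = "rr k \<alpha> \<beta> powr (-2/3)" and ?\<tau> = "tau k \<alpha> \<beta>" and ?\<tau>' = "tau' k \<alpha> \<beta>"
    and ?\<omega> = "omg k \<alpha> \<beta>"
  have angles: "0 < ?\<omega>" "?\<omega> < ?\<tau>" "?\<tau> < ?\<tau>'" "?\<tau>' < pi/2"
    using arcsin_parameters_ordered assms by auto
  then have cos_pos: "0 < cos ?\<tau>" "0 < cos ?\<tau>'" "0 < cos ?\<omega>"
    by (auto intro!: cos_gt_zero_pi)
  have cos_sq: "12 * cos ?\<tau> ^ 2 \<le> 13 * cos ?\<tau>' ^ 2"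
    using cos_tau_sq_le assms by auto
  have "N' 1 k \<alpha> \<beta> \<le> N 1 k \<alpha> \<beta>"
    unfolding N_eq_edge_bound N'_eq_edge_bound
    using angles cos_pos sin_add_pow4_cross_mono[OF _ _ _ _ cos_sq]
    by (intro edge_bound_mono cos_monotone_0_pi_le) auto
  moreover have "N (-1) k \<alpha> \<beta> \<le> N' (-1) k \<alpha> \<beta>"
    unfolding N_eq_edge_bound N'_eq_edge_bound neg_le_iff_le
    using angles cos_pos sin_diff_pow4_cross_mono[of ?\<omega> ?\<tau> ?\<tau>']
    by (intro edge_bound_mono cos_monotone_0_pi_le) auto
  moreover have "N 1 k \<alpha> \<beta> \<le> delta 1 k \<alpha> \<beta>"
    unfolding N_eq_edge_bound delta_eq_cos using cos_pos by (intro edge_bound_le_cos) auto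
  moreover have "delta (-1) k \<alpha> \<beta> \<le> N (-1) k \<alpha> \<beta>"
    unfolding N_eq_edge_bound delta_eq_cos neg_le_iff_le
    using cos_pos edge_bound_le_cos[of "5/17" ?\<rho> ?\<tau> "- ?\<omega>"] by simp
  ultimately show ?thesis
    by auto
qed

end
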